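(* Consider a single-parameter setting with $n$ agents, single-dimensional signals, and a downward-closed feasibility family $\mathcal{I}\subseteq 2^{[n]}$, in which every valuation $v_i$ is $d$-SOS ($d\ge1$). Then the Random Sampling Vickrey (RS-V) mechanism is universally ex-post IC-IR, and for every true signal profile $\mathbf{s}$ (with truthful reports) its expected welfare is at least $\frac{1}{2(d+1)}\max_{S\in\mathcal{I}}\sum_{i\in S}v_i(\mathbf{s})$. In particular, for SOS valuations ($d=1$) it is a $4$-approximation to the optimal social welfare.
   Context: Model: agents $1,\dots,n$; agent $j$ has a private signal $s_j\in\mathbb{R}_{\ge0}$; the value of agent $j$ for being served is $v_j(\mathbf{s})\ge0$, a publicly known function of the full profile $\mathbf{s}=(s_1,\dots,s_n)$, weakly increasing in every coordinate and strictly increasing in $s_j$. $\mathcal{I}$ is downward closed (subsets of feasible sets are feasible). A deterministic mechanism maps reported signals to a served set in $\mathcal{I}$ (indicators $x_i\in\{0,1\}$) and payments $p_i$; agent $i$ with true signal $s_i$ reporting $s_i'$ while others report truthfully $\mathbf{s}_{-i}$ gets utility $x_i(s_i',\mathbf{s}_{-i})v_i(s_i,\mathbf{s}_{-i})-p_i(s_i',\mathbf{s}_{-i})$. Ex-post IC: for every true profile, truthful reporting maximizes this utility; ex-post IR: truthful utility is nonnegative. A randomized mechanism is a distribution over deterministic ones; it is universally ex-post IC-IR if every deterministic mechanism in its support is. A deterministic allocation rule is monotone if for all $i,\mathbf{s}_{-i}$ and $s_i\le s_i'$, $x_i(s_i,\mathbf{s}_{-i})=1$ implies $x_i(s_i',\mathbf{s}_{-i})=1$;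 by a known characterization, a deterministic allocation rule admits payments making it ex-post IC-IR iff it is monotone, and the mechanism uses such payments. RS-V: elicit reports $\tilde{\mathbf{s}}$; partition agents into $A,B$ uniformly at random (each agent independently in each part w.p. 1/2); for $i\in B$ let $w_i=v_i(\tilde{\mathbf{s}}_A,\tilde s_i,\mathbf{0}_{B\setminus\{i\}})$; serve a set in $\arg\max_{S\in\mathcal{I},S\subseteq B}\sum_{i\in S}w_i$ (ties broken by a fixed rule); agents in $A$ are never served. $d$-SOS: for every coordinate $j$, $s_j\ge 0$, $\delta\ge0$, and $\mathbf{s}'_{-j}\le\mathbf{s}_{-j}$ coordinate-wise, $d\big(v(\mathbf{s}'_{-j},s_j+\delta)-v(\mathbf{s}'_{-j},s_j)\big)\ge v(\mathbf{s}_{-j},s_j+\delta)-v(\mathbf{s}_{-j},s_j)$; SOS means $d=1$. *)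

theory Defs
  imports Complex_Main
begin

definition nonneg_profile :: "('a \<Rightarrow> real) \<Rightarrow> bool" where
  "nonneg_profile s \<longleftrightarrow> (\<forall>k. 0 \<le> s k)"

definition valid_valuations :: "('a \<Rightarrow> ('a \<Rightarrow> real) \<Rightarrow> real) \<Rightarrow> bool" where
  "valid_valuations v \<longleftrightarrow>
     (\<forall>i s. nonneg_profile s \<longrightarrow> 0 \<le> v i s) \<and>
     (\<forall>i s t. nonneg_profile s \<longrightarrow> (\<forall>k. s k \<le> t k) \<longrightarrow> v i s \<le> v i t) \<and>
     (\<forall>i s a. nonneg_profile s \<longrightarrow> s i < a \<longrightarrow> v i s < v i (s(i := a)))"

definition downward_closed :: "'a set set \<Rightarrow> bool" where
  "downward_closed I \<longleftrightarrow> {} \<in> I \<and> (\<forall>S T. S \<in> I \<longrightarrow> T \<subseteq> S \<longrightarrow> T \<in> I)"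

definition d_SOS :: "real \<Rightarrow> (('a \<Rightarrow> real) \<Rightarrow> real) \<Rightarrow> bool" where
  "d_SOS d f \<longleftrightarrow>
     (\<forall>j s s' \<delta>. nonneg_profile s \<longrightarrow> 0 \<le> \<delta> \<longrightarrow>
        (\<forall>k. k \<noteq> j \<longrightarrow> 0 \<le> s' k \<and> s' k \<le> s k) \<longrightarrow>
        d * (f (s'(j := s j + \<delta>)) - f (s'(j := s j)))
          \<ge> f (s(j := s j + \<delta>)) - f (s(j := s j)))"

definition tie_rule :: "('a set set \<Rightarrow> 'a set) \<Rightarrow> bool" where
  "tie_rule tb \<longleftrightarrow> (\<forall>X. X \<noteq> {} \<longrightarrow> tb X \<in> X)"

definition rsv_weight ::
  "('a \<Rightarrow> ('a \<Rightarrow> real) \<Rightarrow> real) \<Rightarrow> 'a set \<Rightarrow> ('a \<Rightarrow> real) \<Rightarrow> 'a \<Rightarrow> real" where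
  "rsv_weight v A s i = v i (\<lambda>k. if k \<in> A \<or> k = i then s k else 0)"

definition rsv_argmax ::
  "('a \<Rightarrow> ('a \<Rightarrow> real) \<Rightarrow> real) \<Rightarrow> 'a set set \<Rightarrow> 'a set \<Rightarrow> ('a \<Rightarrow> real) \<Rightarrow> 'a set set" where
  "rsv_argmax v I A s =
     {S \<in> I. S \<subseteq> - A \<and>
        (\<forall>T \<in> I. T \<subseteq> - A \<longrightarrow> sum (rsv_weight v A s) T \<le> sum (rsv_weight v A s) S)}"

text \<open>The deterministic RS-V mechanism for a fixed realisation A of the random part A:
  the set of served agents at reported profile s.\<close>
definition rsv_alloc ::
  "('a \<Rightarrow> ('a \<Rightarrow> real) \<Rightarrow> real) \<Rightarrow> 'a set set \<Rightarrow> ('a set set \<Rightarrow> 'a set) \<Rightarrow> 'a set \<Rightarrow> ('a \<Rightarrow> real) \<Rightarrow> 'a set" where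
  "rsv_alloc v I tb A s = tb (rsv_argmax v I A s)"

definition ex_post_IC_IR ::
  "('a \<Rightarrow> ('a \<Rightarrow> real) \<Rightarrow> real) \<Rightarrow> (('a \<Rightarrow> real) \<Rightarrow> 'a set) \<Rightarrow> ('a \<Rightarrow> ('a \<Rightarrow> real) \<Rightarrow> real) \<Rightarrow> bool" where
  "ex_post_IC_IR v x p \<longleftrightarrow>
     (\<forall>s i t. nonneg_profile s \<longrightarrow> 0 \<le> t \<longrightarrow>
        (if i \<in> x s then v i s else 0) - p i s
          \<ge> (if i \<in> x (s(i := t)) then v i s else 0) - p i (s(i := t))) \<and>
     (\<forall>s i. nonneg_profile s \<longrightarrow> (if i \<in> x s then v i s else 0) - p i s \<ge> 0)"

definition rsv_expected_welfare ::
  "('a::finite \<Rightarrow> ('a \<Rightarrow> real) \<Rightarrow> real) \<Rightarrow> 'a set set \<Rightarrow> ('a set set \<Rightarrow> 'a set) \<Rightarrow> ('a \<Rightarrow> real) \<Rightarrow> real" where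
  "rsv_expected_welfare v I tb s =
     (\<Sum>A \<in> Pow (UNIV :: 'a set). \<Sum>i \<in> rsv_alloc v I tb A s. v i s) / 2 ^ card (UNIV :: 'a set)"

definition opt_welfare ::
  "('a \<Rightarrow> ('a \<Rightarrow> real) \<Rightarrow> real) \<Rightarrow> 'a set set \<Rightarrow> ('a \<Rightarrow> real) \<Rightarrow> real" where
  "opt_welfare v I s = Max ((\<lambda>S. \<Sum>i \<in> S. v i s) ` I)"

end

theory Submission
  imports Defs
begin

text \<open>Fix the sample A. Every agent of B = -A has a weight that depends on her own report
  (increasingly) and on the reports of A, but not on the other agents of B; so raising a report
  can only help to stay in a maximum-weight feasible set, and the resulting monotone allocation
  is implemented by threshold payments.

  For welfare, let w_j(X) be the value of j when only the agents of X \<union> {j} keep their true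
  signals. Telescoping d-SOS along the agents outside A \<union> {j} gives
  v_j(s) \<le> w_j(A) + d w_j(B). As A and B are exchangeable, both terms have the same expectation,
  and w_j(A) does not depend on whether j \<in> A; hence E[w_j(A) 1[j \<in> B]] \<ge> v_j(s) / (2(d+1)).
  Summing over an optimal set S, the weight of the feasible set S \<inter> B is a lower bound on the
  maximum weight chosen by RS-V, and weights never exceed true values.\<close>

definition monotone_allocation :: "(('a \<Rightarrow> real) \<Rightarrow> 'a set) \<Rightarrow> bool" where
  "monotone_allocation x \<longleftrightarrow>
     (\<forall>s i t. nonneg_profile s \<longrightarrow> s i \<le> t \<longrightarrow> i \<in> x s \<longrightarrow> i \<in> x (s(i := t)))"

definition threshold :: "(('a \<Rightarrow> real) \<Rightarrow> 'a set) \<Rightarrow> ('a \<Rightarrow> real) \<Rightarrow> 'a \<Rightarrow> real" where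
  "threshold x s i = Inf {t. 0 \<le> t \<and> i \<in> x (s(i := t))}"

definition threshold_payment ::
  "('a \<Rightarrow> ('a \<Rightarrow> real) \<Rightarrow> real) \<Rightarrow> (('a \<Rightarrow> real) \<Rightarrow> 'a set) \<Rightarrow> 'a \<Rightarrow> ('a \<Rightarrow> real) \<Rightarrow> real" where
  "threshold_payment v x i s = (if i \<in> x s then v i (s(i := threshold x s i)) else 0)"

lemma monotone_allocationD:
  "monotone_allocation x \<Longrightarrow> nonneg_profile s \<Longrightarrow> s i \<le> t \<Longrightarrow> i \<in> x s \<Longrightarrow> i \<in> x (s(i := t))"
  unfolding monotone_allocation_def by blast

lemma threshold_fun_upd [simp]: "threshold x (s(i := t)) i = threshold x s i"
  by (simp add: threshold_def)

lemma threshold_bounds: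
  assumes "nonneg_profile s" and "i \<in> x s"
  shows "0 \<le> threshold x s i" and "threshold x s i \<le> s i"
proof -
  let ?T = "{t. 0 \<le> t \<and> i \<in> x (s(i := t))}"
  have mem: "s i \<in> ?T" using assms by (simp add: nonneg_profile_def)
  show "0 \<le> threshold x s i" unfolding threshold_def using mem by (intro cInf_greatest) auto
  show "threshold x s i \<le> s i" unfolding threshold_def
    using mem by (intro cInf_lower) (auto intro: bdd_belowI[of _ 0])
qed

lemma threshold_ge_if_not_allocated:
  assumes x: "monotone_allocation x" and s: "nonneg_profile s"
    and out: "i \<notin> x s" and t: "0 \<le> t" "i \<in> x (s(i := t))"
  shows "s i \<le> threshold x s i"
  unfolding threshold_def
proof (rule cInf_greatest)
  show "{t. 0 \<le> t \<and> i \<in> x (s(i := t))} \<noteq> {}" using t by blast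
next
  fix u assume u: "u \<in> {t. 0 \<le> t \<and> i \<in> x (s(i := t))}"
  show "s i \<le> u"
  proof (rule ccontr)
    assume "\<not> s i \<le> u"
    moreover have "nonneg_profile (s(i := u))" using s u by (simp add: nonneg_profile_def)
    ultimately have "i \<in> x ((s(i := u))(i := s i))"
      using u by (intro monotone_allocationD[OF x, of "s(i := u)" i "s i"]) auto
    with out show False by simp
  qed
qed

lemma monotone_allocation_ex_post_IC_IR:
  assumes v: "valid_valuations v" and x: "monotone_allocation x"
  shows "ex_post_IC_IR v x (threshold_payment v x)"
proof -
  let ?p = "threshold_payment v x"
  have v_mono: "v i t \<le> v i s" if "nonneg_profile t" "\<And>k. t k \<le> s k" for i s t
    using v that unfolding valid_valuations_def by blast
  have IR: "0 \<le> (if i \<in> x s then v i s else 0) - ?p i s" if s: "nonneg_profile s" for s i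
  proof (cases "i \<in> x s")
    case True
    have "nonneg_profile (s(i := threshold x s i))"
      using s threshold_bounds(1)[where x = x, OF s True] by (simp add: nonneg_profile_def)
    then have "v i (s(i := threshold x s i)) \<le> v i s"
      by (rule v_mono) (simp add: threshold_bounds(2)[where x = x, OF s True])
    with True show ?thesis by (simp add: threshold_payment_def)
  qed (simp add: threshold_payment_def)
  have IC: "(if i \<in> x (s(i := t)) then v i s else 0) - ?p i (s(i := t))
          \<le> (if i \<in> x s then v i s else 0) - ?p i s"
    if s: "nonneg_profile s" and t: "0 \<le> t" for s i t
  proof (cases "i \<in> x (s(i := t))")
    case False
    with IR[OF s, of i] show ?thesis by (simp add: threshold_payment_def)
  next
    case dev_in: True
    show ?thesis
    proof (cases "i \<in> x s")
      case True
      with dev_in show ?thesis by (simp add: threshold_payment_def)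
    next
      case False
      have "s i \<le> threshold x s i"
        using threshold_ge_if_not_allocated[OF x s False t dev_in] .
      then have "v i s \<le> v i (s(i := threshold x s i))"
        using s by (intro v_mono) auto
      with dev_in False show ?thesis by (simp add: threshold_payment_def)
    qed
  qed
  show ?thesis unfolding ex_post_IC_IR_def using IC IR by simp
qed

lemma maximizer_keeps_raised_element:
  fixes w w' :: "'a \<Rightarrow> real"
  assumes fin: "finite S"
    and same: "\<And>j. j \<noteq> i \<Longrightarrow> w' j = w j" and raised: "w i < w' i" and i: "i \<in> S"
    and S_opt: "sum w S' \<le> sum w S" and S'_opt: "sum w' S \<le> sum w' S'"
  shows "i \<in> S'"
proof (rule ccontr)
  assume "i \<notin> S'"
  then have "sum w' S' = sum w S'" by (metis same sum.cong)
  also have "\<dots> \<le> sum w S" by (fact S_opt)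
  also have "\<dots> = w i + sum w (S - {i})" using fin i by (simp add: sum.remove)
  also have "sum w (S - {i}) = sum w' (S - {i})" by (intro sum.cong) (simp_all add: same)
  also have "w i + \<dots> < w' i + sum w' (S - {i})" using raised by simp
  also have "\<dots> = sum w' S" using fin i by (simp add: sum.remove)
  finally show False using S'_opt by simp
qed

lemma rsv_argmax_nonempty:
  fixes v :: "'a::finite \<Rightarrow> ('a \<Rightarrow> real) \<Rightarrow> real"
  assumes "downward_closed I"
  shows "rsv_argmax v I A s \<noteq> {}"
proof -
  let ?F = "{S \<in> I. S \<subseteq> - A}" and ?w = "rsv_weight v A s"
  have "{} \<in> ?F" using assms by (simp add: downward_closed_def)
  then have "Max (sum ?w ` ?F) \<in> sum ?w ` ?F" by (intro Max_in) auto
  then obtain S where "S \<in> ?F" "sum ?w S = Max (sum ?w ` ?F)" by auto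
  moreover have "\<forall>T \<in> ?F. sum ?w T \<le> Max (sum ?w ` ?F)" by simp
  ultimately have "S \<in> ?F" "\<forall>T \<in> ?F. sum ?w T \<le> sum ?w S" by auto
  then show ?thesis unfolding rsv_argmax_def by blast
qed

lemma rsv_alloc_in_argmax:
  fixes v :: "'a::finite \<Rightarrow> ('a \<Rightarrow> real) \<Rightarrow> real"
  assumes "downward_closed I" and "tie_rule tb"
  shows "rsv_alloc v I tb A s \<in> rsv_argmax v I A s"
  using rsv_argmax_nonempty[OF assms(1)] assms(2) unfolding tie_rule_def rsv_alloc_def by blast

lemma rsv_weight_fun_upd_other:
  assumes "i \<notin> A" and "j \<noteq> i"
  shows "rsv_weight v A (s(i := t)) j = rsv_weight v A s j"
proof -
  have "(\<lambda>k. if k \<in> A \<or> k = j then (s(i := t)) k else 0) = (\<lambda>k. if k \<in> A \<or> k = j then s k else 0)"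
    using assms by (auto simp: fun_eq_iff)
  then show ?thesis by (simp add: rsv_weight_def)
qed

lemma rsv_weight_fun_upd_self_less:
  assumes "valid_valuations v" and "nonneg_profile s" and "s i < t"
  shows "rsv_weight v A s i < rsv_weight v A (s(i := t)) i"
proof -
  let ?b = "\<lambda>k. if k \<in> A \<or> k = i then s k else 0"
  have "nonneg_profile ?b" using assms(2) by (simp add: nonneg_profile_def)
  then have "v i ?b < v i (?b(i := t))" using assms unfolding valid_valuations_def by auto
  moreover have "?b(i := t) = (\<lambda>k. if k \<in> A \<or> k = i then (s(i := t)) k else 0)"
    by (auto simp: fun_eq_iff)
  ultimately show ?thesis by (simp add: rsv_weight_def)
qed

lemma rsv_alloc_monotone:
  fixes v :: "'a::finite \<Rightarrow> ('a \<Rightarrow> real) \<Rightarrow> real"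
  assumes v: "valid_valuations v" and I: "downward_closed I" and tb: "tie_rule tb"
  shows "monotone_allocation (rsv_alloc v I tb A)"
  unfolding monotone_allocation_def
proof (intro allI impI)
  fix s :: "'a \<Rightarrow> real" and i t
  assume s: "nonneg_profile s" and le: "s i \<le> t" and i: "i \<in> rsv_alloc v I tb A s"
  let ?S = "rsv_alloc v I tb A s" and ?S' = "rsv_alloc v I tb A (s(i := t))"
  have S: "?S \<in> rsv_argmax v I A s" and S': "?S' \<in> rsv_argmax v I A (s(i := t))"
    using rsv_alloc_in_argmax[OF I tb] by blast+
  have "i \<notin> A" using S i unfolding rsv_argmax_def by auto
  show "i \<in> ?S'"
  proof (cases "t = s i")
    case False
    show ?thesis
    proof (rule maximizer_keeps_raised_element[of ?S i "rsv_weight v A (s(i := t))"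
          "rsv_weight v A s"])
      show "rsv_weight v A s i < rsv_weight v A (s(i := t)) i"
        using rsv_weight_fun_upd_self_less[OF v s] le False by simp
      show "sum (rsv_weight v A s) ?S' \<le> sum (rsv_weight v A s) ?S"
        and "sum (rsv_weight v A (s(i := t))) ?S \<le> sum (rsv_weight v A (s(i := t))) ?S'"
        using S S' unfolding rsv_argmax_def by auto
    qed (use \<open>i \<notin> A\<close> i in \<open>auto simp: rsv_weight_fun_upd_other\<close>)
  qed (use i in simp)
qed

definition restrict_profile :: "('a \<Rightarrow> real) \<Rightarrow> 'a set \<Rightarrow> 'a \<Rightarrow> real" where
  "restrict_profile s X = (\<lambda>k. if k \<in> X then s k else 0)"

lemma nonneg_profile_restrict: "nonneg_profile s \<Longrightarrow> nonneg_profile (restrict_profile s X)"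
  by (auto simp: nonneg_profile_def restrict_profile_def)

lemma rsv_weight_eq_restrict: "rsv_weight v A s j = v j (restrict_profile s (insert j A))"
  by (simp add: rsv_weight_def restrict_profile_def disj_commute)

lemma d_SOS_restrict_increment:
  assumes f: "d_SOS d f" and s: "nonneg_profile s" and C: "finite C"
    and disj: "C \<inter> D = {}" and sub: "E \<subseteq> D"
  shows "f (restrict_profile s (D \<union> C)) - f (restrict_profile s D)
       \<le> d * (f (restrict_profile s (E \<union> C)) - f (restrict_profile s E))"
  using C disj
proof (induction C rule: finite_induct)
  case (insert c C)
  let ?r = "restrict_profile s"
  let ?b = "?r (D \<union> C)" and ?b' = "?r (E \<union> C)"
  have cD: "c \<notin> D" and cE: "c \<notin> E" using insert.prems sub by auto
  have "\<forall>k. k \<noteq> c \<longrightarrow> 0 \<le> ?b' k \<and> ?b' k \<le> ?b k"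
    using s sub by (auto simp: restrict_profile_def nonneg_profile_def)
  moreover have "0 \<le> s c" using s by (simp add: nonneg_profile_def)
  ultimately have "f (?b(c := ?b c + s c)) - f (?b(c := ?b c))
      \<le> d * (f (?b'(c := ?b c + s c)) - f (?b'(c := ?b c)))"
    using f nonneg_profile_restrict[OF s] unfolding d_SOS_def by blast
  moreover have "?b c = 0" and "?b(c := 0) = ?b" and "?b'(c := 0) = ?b'"
    using cD cE insert.hyps by (auto simp: restrict_profile_def fun_eq_iff)
  moreover have "?b(c := s c) = ?r (D \<union> insert c C)" and "?b'(c := s c) = ?r (E \<union> insert c C)"
    by (auto simp: restrict_profile_def fun_eq_iff)
  ultimately have "f (?r (D \<union> insert c C)) - f ?b \<le> d * (f (?r (E \<union> insert c C)) - f ?b')"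
    by simp
  with insert.IH insert.prems show ?case by (simp add: algebra_simps)
qed simp

lemma d_SOS_split_bound:
  fixes v :: "'a::finite \<Rightarrow> ('a \<Rightarrow> real) \<Rightarrow> real"
  assumes v: "valid_valuations v" and d: "0 \<le> d" and f: "d_SOS d (v j)" and s: "nonneg_profile s"
  shows "v j s \<le> v j (restrict_profile s (insert j A)) + d * v j (restrict_profile s (insert j (- A)))"
proof -
  have "v j (restrict_profile s (insert j A \<union> - insert j A)) - v j (restrict_profile s (insert j A))
     \<le> d * (v j (restrict_profile s ({j} \<union> - insert j A)) - v j (restrict_profile s {j}))"
    by (rule d_SOS_restrict_increment[OF f s]) auto
  moreover have "restrict_profile s (insert j A \<union> - insert j A) = s"
    by (simp add: restrict_profile_def)
  moreover have "{j} \<union> - insert j A = insert j (- A)" by auto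
  moreover have "0 \<le> d * v j (restrict_profile s {j})"
    using v d nonneg_profile_restrict[OF s] unfolding valid_valuations_def by simp
  ultimately show ?thesis by (simp add: algebra_simps)
qed

lemma sum_subsets_notin_half:
  fixes g :: "'a::finite set \<Rightarrow> real"
  assumes g: "\<And>A. g (insert j A) = g A"
  shows "(\<Sum>A\<in>UNIV. g A) = 2 * (\<Sum>A\<in>UNIV. if j \<notin> A then g A else 0)"
proof -
  have "bij_betw (insert j) {A. j \<notin> A} {A. j \<in> A}"
    by (rule bij_betw_byWitness[where f' = "\<lambda>A. A - {j}"]) auto
  then have "(\<Sum>A | j \<in> A. g A) = (\<Sum>A | j \<notin> A. g A)"
    using sum.reindex_bij_betw[of "insert j" _ _ g] by (simp add: g)
  moreover have "(\<Sum>A\<in>UNIV. g A) = (\<Sum>A | j \<in> A. g A) + (\<Sum>A | j \<notin> A. g A)"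
    using sum.Int_Diff[of UNIV g "{A. j \<in> A}"] by (simp add: Collect_neg_eq Compl_eq_Diff_UNIV)
  ultimately show ?thesis by (simp add: sum.inter_filter[symmetric])
qed

lemma sum_subsets_compl:
  fixes g :: "'a::finite set \<Rightarrow> real"
  shows "(\<Sum>A\<in>UNIV. g (- A)) = (\<Sum>A\<in>UNIV. g A)"
  by (rule sum.reindex_bij_witness[of _ uminus uminus]) auto

lemma rsv_weight_le_value:
  assumes "valid_valuations v" and "nonneg_profile s"
  shows "rsv_weight v A s j \<le> v j s"
proof -
  have "\<forall>k. restrict_profile s (insert j A) k \<le> s k"
    using assms(2) by (auto simp: restrict_profile_def nonneg_profile_def)
  then have "v j (restrict_profile s (insert j A)) \<le> v j s"
    using assms nonneg_profile_restrict unfolding valid_valuations_def by blast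
  then show ?thesis by (simp add: rsv_weight_eq_restrict)
qed

lemma rsv_welfare_ge_feasible_weight:
  fixes v :: "'a::finite \<Rightarrow> ('a \<Rightarrow> real) \<Rightarrow> real"
  assumes v: "valid_valuations v" and I: "downward_closed I" and tb: "tie_rule tb"
    and s: "nonneg_profile s" and T: "T \<in> I" "T \<subseteq> - A"
  shows "sum (rsv_weight v A s) T \<le> (\<Sum>i \<in> rsv_alloc v I tb A s. v i s)"
proof -
  have "sum (rsv_weight v A s) T \<le> sum (rsv_weight v A s) (rsv_alloc v I tb A s)"
    using rsv_alloc_in_argmax[OF I tb] T unfolding rsv_argmax_def by blast
  also have "\<dots> \<le> (\<Sum>i \<in> rsv_alloc v I tb A s. v i s)"
    by (intro sum_mono rsv_weight_le_value[OF v s])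
  finally show ?thesis .
qed

lemma rsv_expected_weight_ge:
  fixes v :: "'a::finite \<Rightarrow> ('a \<Rightarrow> real) \<Rightarrow> real"
  assumes v: "valid_valuations v" and d: "0 \<le> d" and f: "d_SOS d (v j)" and s: "nonneg_profile s"
  shows "2 ^ card (UNIV :: 'a set) * v j s
       \<le> 2 * (d + 1) * (\<Sum>A\<in>UNIV. if j \<notin> A then rsv_weight v A s j else 0)"
proof -
  let ?g = "\<lambda>A. rsv_weight v A s j"
  have "2 ^ card (UNIV :: 'a set) * v j s = (\<Sum>A\<in>(UNIV :: 'a set set). v j s)"
    using card_Pow[of "UNIV :: 'a set"] by simp
  also have "\<dots> \<le> (\<Sum>A\<in>UNIV. ?g A + d * ?g (- A))"
    using d_SOS_split_bound[OF v d f s] by (intro sum_mono) (simp add: rsv_weight_eq_restrict)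
  also have "\<dots> = (d + 1) * (\<Sum>A\<in>UNIV. ?g A)"
    using sum_subsets_compl[of ?g]
    by (simp add: sum.distrib sum_distrib_left[symmetric] algebra_simps)
  also have "(\<Sum>A\<in>UNIV. ?g A) = 2 * (\<Sum>A\<in>UNIV. if j \<notin> A then ?g A else 0)"
    by (rule sum_subsets_notin_half) (simp add: rsv_weight_eq_restrict)
  finally show ?thesis by (simp add: algebra_simps)
qed

lemma rsv_expected_welfare_ge:
  fixes v :: "'a::finite \<Rightarrow> ('a \<Rightarrow> real) \<Rightarrow> real"
  assumes v: "valid_valuations v" and I: "downward_closed I" and d: "0 \<le> d"
    and f: "\<forall>i. d_SOS d (v i)" and tb: "tie_rule tb" and s: "nonneg_profile s"
  shows "opt_welfare v I s / (2 * (d + 1)) \<le> rsv_expected_welfare v I tb s"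
proof -
  let ?N = "card (UNIV :: 'a set)"
  let ?h = "\<lambda>j A. if j \<notin> A then rsv_weight v A s j else 0"
  have "opt_welfare v I s \<in> (\<lambda>S. \<Sum>i \<in> S. v i s) ` I"
    unfolding opt_welfare_def using I by (intro Max_in) (auto simp: downward_closed_def)
  then obtain S where S: "S \<in> I" and opt: "opt_welfare v I s = (\<Sum>i \<in> S. v i s)" by auto
  have "2 ^ ?N * opt_welfare v I s = (\<Sum>j\<in>S. 2 ^ ?N * v j s)"
    by (simp add: opt sum_distrib_left)
  also have "\<dots> \<le> (\<Sum>j\<in>S. 2 * (d + 1) * (\<Sum>A\<in>UNIV. ?h j A))"
    using d by (intro sum_mono rsv_expected_weight_ge[OF v _ f[rule_format] s]) simp
  also have "\<dots> = 2 * (d + 1) * (\<Sum>A\<in>UNIV. sum (rsv_weight v A s) (S \<inter> - A))"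
    by (simp add: sum_distrib_left[symmetric] sum.swap[of _ S] sum.inter_restrict)
  also have "\<dots> \<le> 2 * (d + 1) * (\<Sum>A\<in>UNIV. \<Sum>i \<in> rsv_alloc v I tb A s. v i s)"
  proof -
    have "S \<inter> - A \<in> I" for A using I S unfolding downward_closed_def by blast
    then show ?thesis using d
      by (intro mult_left_mono sum_mono rsv_welfare_ge_feasible_weight[OF v I tb s]) auto
  qed
  also have "\<dots> = 2 ^ ?N * (2 * (d + 1) * rsv_expected_welfare v I tb s)"
    by (simp add: rsv_expected_welfare_def)
  finally have "opt_welfare v I s \<le> 2 * (d + 1) * rsv_expected_welfare v I tb s" by simp
  then show ?thesis using d by (simp add: pos_divide_le_eq mult.commute)
qed

theorem mainTheorem3:
  fixes v :: "'a::finite \<Rightarrow> ('a \<Rightarrow> real) \<Rightarrow> real"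
    and I :: "'a set set"
    and tb :: "'a set set \<Rightarrow> 'a set"
    and d :: real
  assumes "valid_valuations v"
    and "downward_closed I"
    and "1 \<le> d"
    and "\<forall>i. d_SOS d (v i)"
    and "tie_rule tb"
  shows "(\<forall>A. \<exists>p. ex_post_IC_IR v (rsv_alloc v I tb A) p)
       \<and> (\<forall>s. nonneg_profile s \<longrightarrow>
            rsv_expected_welfare v I tb s \<ge> opt_welfare v I s / (2 * (d + 1)))"
proof (intro conjI allI impI exI)
  fix A
  show "ex_post_IC_IR v (rsv_alloc v I tb A) (threshold_payment v (rsv_alloc v I tb A))"
    using monotone_allocation_ex_post_IC_IR rsv_alloc_monotone assms by blast
next
  fix s :: "'a \<Rightarrow> real"
  assume "nonneg_profile s"
  moreover have "0 \<le> d" using \<open>1 \<le> d\<close> by simp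
  ultimately show "opt_welfare v I s / (2 * (d + 1)) \<le> rsv_expected_welfare v I tb s"
    using rsv_expected_welfare_ge assms by blast
qed

end
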